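(* Let $N\ge 1$. For each instance $i\in\{1,\dots,N\}$ let $r_i\in\{0,1\}$ be a binary label and $y_i\in\mathbb{R}$ a current prediction, and put $\psi_i=\frac{e^{y_i}}{e^{y_i}+e^{-y_i}}$. Let the logistic loss be $\ell(y_i)=-r_i\ln\psi_i-(1-r_i)\ln(1-\psi_i)$, with first and second derivatives $g_i=\ell'(y_i)=2(\psi_i-r_i)$ and $h_i=\ell''(y_i)=4\psi_i(1-\psi_i)>0$. Let $p_i\in(0,1]$ and $q_i\in\{0,1\}$ for each $i$, and let $\mathbf{Q}=\mathrm{diag}\left(\frac{q_1}{p_1},\dots,\frac{q_N}{p_N}\right)$, $\mathbf{H}=\mathrm{diag}(h_1,\dots,h_N)$, $\mathbf{g}=(g_1,\dots,g_N)^\top$. Then, with $(\mathbf{H}\mathbf{Q})^{-1}$ understood as the inverse on the sampled coordinates $\{i: q_i=1\}$ (i.e. the Moore--Penrose pseudo-inverse of the diagonal matrix $\mathbf{H}\mathbf{Q}$), $$\mathbf{g}^\top\mathbf{Q}(\mathbf{H}\mathbf{Q})^{+}\mathbf{Q}\mathbf{g}=\sum_{i:\,q_i=1}\frac{\left(\frac{q_ig_i}{p_i}\right)^2}{\frac{q_ih_i}{p_i}}\;\ge\;\sum_{i=1}^N\frac{q_i}{p_i}\,\ell(y_i).$$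
   Context: This is the setting of gradient tree boosting with logistic loss (LogitBoost) combined with importance sampling: on each boosting iteration, instance $i$ is included in the subsample independently with probability $p_i$, and $q_i\in\{0,1\}$ is the indicator that it was sampled. The importance-balanced (reweighted) loss is $L(\mathbf{y})=\sum_i \frac{q_i}{p_i}\ell(y_i)$. *)

theory Defs
  imports "HOL-Analysis.Analysis"
begin

definition psi :: "real \<Rightarrow> real" where
  "psi y = exp y / (exp y + exp (- y))"

definition logloss :: "real \<Rightarrow> real \<Rightarrow> real" where
  "logloss r y = - r * ln (psi y) - (1 - r) * ln (1 - psi y)"

definition grad :: "real \<Rightarrow> real \<Rightarrow> real" where
  "grad r y = 2 * (psi y - r)"

definition hess :: "real \<Rightarrow> real" where
  "hess y = 4 * psi y * (1 - psi y)"

definition diag_mat :: "real^'n \<Rightarrow> real^'n^'n" where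
  "diag_mat d = (\<chi> i j. if i = j then d $ i else 0)"

definition diag_pinv :: "real^'n^'n \<Rightarrow> real^'n^'n" where
  "diag_pinv A = (\<chi> i j. if i = j \<and> A $ i $ i \<noteq> 0 then inverse (A $ i $ i) else 0)"

end

theory Submission
  imports Defs
begin

text \<open>Per instance, the logistic loss is bounded by its Newton decrement \<open>g\<^sup>2/h\<close>: for \<open>r = 1\<close>
  the loss is \<open>-ln \<psi>\<close> and \<open>g\<^sup>2/h = 1/\<psi> - 1\<close>, so the bound is \<open>ln x \<le> x - 1\<close> at \<open>x = 1/\<psi>\<close>;
  the case \<open>r = 0\<close> is the same after \<open>y \<mapsto> -y\<close>, which swaps \<open>\<psi>\<close> and \<open>1 - \<psi>\<close>.
  Weighting by \<open>q\<^sub>i/p\<^sub>i\<close> and summing gives the inequality, and since all matrices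
  involved are diagonal the quadratic form is the displayed sum over the sampled coordinates.\<close>

lemma psi_gt_0: "0 < psi y"
  unfolding psi_def by (simp add: add_pos_pos)

lemma psi_less_1: "psi y < 1"
  unfolding psi_def by (simp add: add_pos_pos)

lemma psi_minus: "psi (- y) = 1 - psi y"
proof -
  have "0 < exp y + exp (- y)"
    by (intro add_pos_pos) simp_all
  then show ?thesis
    unfolding psi_def by (simp add: field_simps add.commute)
qed

lemma hess_gt_0: "0 < hess y"
  unfolding hess_def using psi_gt_0[of y] psi_less_1[of y] by simp

lemma hess_minus: "hess (- y) = hess y"
  unfolding hess_def psi_minus by simp

lemma grad_zero_eq: "grad 0 y = - grad 1 (- y)"
  unfolding grad_def psi_minus by simp

lemma logloss_zero_eq: "logloss 0 y = logloss 1 (- y)"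
  unfolding logloss_def psi_minus by simp

lemma minus_ln_le: "0 < (t::real) \<Longrightarrow> - ln t \<le> 1 / t - 1"
  using ln_le_minus_one[of "1 / t"] by (simp add: ln_div)

lemma logloss_one_le: "logloss 1 y \<le> (grad 1 y)\<^sup>2 / hess y"
proof -
  have "(grad 1 y)\<^sup>2 / hess y = 1 / psi y - 1"
    using psi_gt_0[of y] psi_less_1[of y]
    unfolding grad_def hess_def by (simp add: power2_eq_square field_simps)
  moreover have "logloss 1 y = - ln (psi y)"
    unfolding logloss_def by simp
  ultimately show ?thesis
    using minus_ln_le[OF psi_gt_0] by simp
qed

lemma logloss_le_grad_sq_div_hess:
  assumes "r \<in> {0, 1}"
  shows "logloss r y \<le> (grad r y)\<^sup>2 / hess y"
  using assms logloss_one_le[of y] logloss_one_le[of "- y"]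
  by (auto simp: logloss_zero_eq grad_zero_eq hess_minus)

lemma weighted_logloss_le:
  assumes "r \<in> {0, 1}" and "q \<in> {0, 1}" and "0 < p"
  shows "q / p * logloss r y \<le> (q * grad r y / p)\<^sup>2 / (q * hess y / p)"
proof (cases "q = 1")
  case True
  have "(grad r y / p)\<^sup>2 / (hess y / p) = (grad r y)\<^sup>2 / hess y / p"
    using \<open>0 < p\<close> hess_gt_0[of y] by (simp add: power2_eq_square field_simps)
  then show ?thesis
    using True \<open>0 < p\<close> divide_right_mono[OF logloss_le_grad_sq_div_hess[OF assms(1)], of p y]
    by simp
next
  case False
  with assms(2) show ?thesis by simp
qed

lemma diag_mat_mult_vec: "diag_mat d *v v = (\<chi> i. d $ i * v $ i)"
  unfolding diag_mat_def matrix_vector_mult_def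
  by (simp add: vec_eq_iff if_distrib[of "\<lambda>x. x * _"] cong: if_cong)

lemma diag_mat_mult_diag_mat: "diag_mat d ** diag_mat e = diag_mat (\<chi> i. d $ i * e $ i)"
  unfolding diag_mat_def matrix_matrix_mult_def
  by (simp add: vec_eq_iff if_distrib[of "\<lambda>x. x * _"] cong: if_cong)

text \<open>Since \<open>inverse 0 = 0\<close>, the case distinction in \<^const>\<open>diag_pinv\<close> disappears.\<close>
lemma diag_pinv_diag_mat: "diag_pinv (diag_mat d) = diag_mat (\<chi> i. inverse (d $ i))"
  unfolding diag_pinv_def diag_mat_def by (simp add: vec_eq_iff)

lemma diag_pinv_quadratic_form:
  "v \<bullet> (diag_mat a *v (diag_pinv (diag_mat b ** diag_mat a) *v (diag_mat a *v v)))
     = (\<Sum>i\<in>UNIV. (a $ i * v $ i)\<^sup>2 * inverse (b $ i * a $ i))"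
  unfolding diag_mat_mult_diag_mat diag_pinv_diag_mat diag_mat_mult_vec inner_vec_def
  by (simp add: power2_eq_square mult_ac)

theorem lemma3:
  fixes r y p q :: "real^'n"
  assumes "\<forall>i. r $ i \<in> {0, 1}"
    and "\<forall>i. 0 < p $ i \<and> p $ i \<le> 1"
    and "\<forall>i. q $ i \<in> {0, 1}"
  defines "g \<equiv> (\<chi> i. grad (r $ i) (y $ i))"
    and "h \<equiv> (\<chi> i. hess (y $ i))"
    and "Q \<equiv> diag_mat (\<chi> i. q $ i / p $ i)"
    and "H \<equiv> diag_mat (\<chi> i. hess (y $ i))"
  shows "g \<bullet> (Q *v (diag_pinv (H ** Q) *v (Q *v g)))
           = (\<Sum>i\<in>{i. q $ i = 1}. (q $ i * g $ i / p $ i)\<^sup>2 / (q $ i * h $ i / p $ i))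
       \<and> (\<Sum>i\<in>{i. q $ i = 1}. (q $ i * g $ i / p $ i)\<^sup>2 / (q $ i * h $ i / p $ i))
           \<ge> (\<Sum>i\<in>UNIV. q $ i / p $ i * logloss (r $ i) (y $ i))"
proof -
  let ?f = "\<lambda>i. (q $ i * g $ i / p $ i)\<^sup>2 / (q $ i * h $ i / p $ i)"
  have form: "g \<bullet> (Q *v (diag_pinv (H ** Q) *v (Q *v g))) = (\<Sum>i\<in>UNIV. ?f i)"
    unfolding Q_def H_def diag_pinv_quadratic_form
    by (simp add: h_def divide_inverse mult_ac)
  \<comment> \<open>unsampled terms are \<open>0 / 0 = 0\<close>\<close>
  have sampled: "(\<Sum>i\<in>UNIV. ?f i) = (\<Sum>i\<in>{i. q $ i = 1}. ?f i)"
    using assms(3) by (intro sum.mono_neutral_right) auto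
  have bound: "(\<Sum>i\<in>UNIV. q $ i / p $ i * logloss (r $ i) (y $ i)) \<le> (\<Sum>i\<in>UNIV. ?f i)"
    using assms(1-3) weighted_logloss_le by (auto simp: g_def h_def intro!: sum_mono)
  show ?thesis
    using form sampled bound by simp
qed

end
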